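(* For $|q|<1$, \[ -q\left(\frac{f_5^5}{f_1}+2q\frac{f_{10}^5}{f_2}\right)^2+f_1^4f_5^4+9q\frac{f_5^{10}}{f_1^2}-8q^3\frac{f_{10}^{10}}{f_2^2}=\frac{f_2^4f_5^{12}}{f_1^4f_{10}^4}+4q^2\frac{f_2^2f_5^2f_{10}^6}{f_1^2}. \]
   Context: For $m\in\mathbb{N}$ and $|q|<1$, $f_m:=\prod_{n\ge1}(1-q^{mn})$. *)

theory Defs
  imports "HOL-Analysis.Analysis"
begin

definition eta_f :: "nat \<Rightarrow> complex \<Rightarrow> complex" where
  "eta_f m q = (\<Prod>n. (1 - q ^ (m * Suc n)))"

end

theory Submission
  imports Defs
begin

text \<open>
  With E = f_2, D = f_10, P = (q^5; q^10)_\<infinity> = f_5 / f_10 and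
  R = (q, q^3, q^7, q^9; q^10)_\<infinity> = f_1 f_10 / (f_2 f_5), the identity becomes a polynomial
  consequence of two classical 5-dissections of theta series,
    (2 \<psi>(q))^2 = q (2 \<psi>(q^5))^2 + 4 f_5^2 (-q, -q^2, -q^3, -q^4; q^5)_\<infinity>,
    \<phi>(-q)^2 = \<phi>(-q^5)^2 - 4 q f_10^2 R,
  where 2 \<psi>(q) = \<Sum> q^(n(n+1)/2) and \<phi>(-q) = \<Sum> (-1)^n q^(n^2), summed over all integers n.

  Each of them is obtained by writing the square of the series as a sum over \<int>^2 and splitting
  \<int>^2 into the five cosets of the sublattice m \<equiv> 2n (mod 5). A quarter turn of \<int>^2 preserves the
  summand, fixes one coset and permutes the other four cyclically, so the total is the sum over the
  fixed coset plus four times the sum over any other coset. Both of these cosets are images of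
  linear parametrisations of \<int>^2 under which the summand factors, so each of the two sums is a
  product of two theta series of modulus 5 or 10. Every theta series is evaluated as an infinite
  product by the Jacobi triple product identity, which follows from the finite q-binomial theorem
  by letting the number of factors tend to infinity (Tannery's theorem).
\<close>

section \<open>q-Pochhammer symbols\<close>

definition qpochhammer :: "nat \<Rightarrow> 'a::comm_ring_1 \<Rightarrow> 'a \<Rightarrow> 'a" where
  "qpochhammer n a q = (\<Prod>k<n. 1 - a * q ^ k)"

definition qpochhammer_inf :: "'a::real_normed_field \<Rightarrow> 'a \<Rightarrow> 'a" where
  "qpochhammer_inf a q = (\<Prod>k. 1 - a * q ^ k)"

lemma convergent_prod_qpochhammer:
  fixes a q :: "'a::{real_normed_field, banach}"
  assumes "norm q < 1"
  shows "convergent_prod (\<lambda>k. 1 - a * q ^ k)"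
proof -
  have "summable (\<lambda>k. norm a * norm q ^ k)"
    using assms by (intro summable_mult summable_geometric) simp
  then have "summable (\<lambda>k. norm ((1 - a * q ^ k) - 1))"
    by (simp add: norm_mult norm_power)
  then show ?thesis
    by (intro abs_convergent_prod_imp_convergent_prod summable_imp_abs_convergent_prod)
qed

lemma tendsto_qpochhammer:
  fixes a q :: "'a::{real_normed_field, banach}"
  assumes "norm q < 1"
  shows "(\<lambda>n. qpochhammer n a q) \<longlonglongrightarrow> qpochhammer_inf a q"
  unfolding qpochhammer_def qpochhammer_inf_def
  using convergent_prod_qpochhammer[OF assms] convergent_prod_has_prod has_prod_imp_tendsto' by blast

lemma qpochhammer_factor_nonzero:
  fixes a q :: "'a::real_normed_field"
  assumes "norm q < 1" "norm a < 1"
  shows "1 - a * q ^ k \<noteq> 0"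
proof
  assume "1 - a * q ^ k = 0"
  then have "norm a * norm q ^ k = 1"
    by (metis eq_iff_diff_eq_0 norm_mult norm_one norm_power)
  moreover have "norm a * norm q ^ k \<le> norm a"
    using assms by (intro mult_left_le power_le_one) auto
  ultimately show False
    using assms by simp
qed

lemma qpochhammer_nonzero:
  fixes a q :: "'a::real_normed_field"
  assumes "norm q < 1" "norm a < 1"
  shows "qpochhammer n a q \<noteq> 0"
  using qpochhammer_factor_nonzero[OF assms] by (simp add: qpochhammer_def)

lemma qpochhammer_inf_nonzero:
  fixes a q :: "'a::{real_normed_field, banach}"
  assumes "norm q < 1" "norm a < 1"
  shows "qpochhammer_inf a q \<noteq> 0"
  unfolding qpochhammer_inf_def
  by (rule prodinf_nonzero[OF convergent_prod_qpochhammer qpochhammer_factor_nonzero]) (use assms in auto)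

lemma qpochhammer_inf_unfold:
  fixes a q :: "'a::{real_normed_field, banach}"
  assumes "norm q < 1"
  shows "qpochhammer_inf a q = (1 - a) * qpochhammer_inf (a * q) q"
proof (cases "a = 1")
  case False
  have "(\<Prod>k. 1 - a * q ^ Suc k) = qpochhammer_inf a q / (1 - a * q ^ 0)"
    unfolding qpochhammer_inf_def
    by (rule prodinf_split_head[OF convergent_prod_qpochhammer[OF assms]]) (use False in simp)
  then show ?thesis
    using False by (simp add: qpochhammer_inf_def mult_ac)
next
  case True
  have "(\<lambda>k. 1 - a * q ^ k) has_prod qpochhammer_inf a q"
    unfolding qpochhammer_inf_def by (rule convergent_prod_has_prod[OF convergent_prod_qpochhammer[OF assms]])
  then have "qpochhammer_inf a q = 0"
    by (rule has_prod_zeroI[where n = 0]) (simp add: True)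
  then show ?thesis using True by simp
qed

lemma qpochhammer_inf_mult_minus:
  fixes a q :: "'a::{real_normed_field, banach}"
  assumes "norm q < 1"
  shows "qpochhammer_inf a q * qpochhammer_inf (- a) q = qpochhammer_inf (a ^ 2) (q ^ 2)"
  unfolding qpochhammer_inf_def
  by (subst prodinf_mult[OF convergent_prod_qpochhammer convergent_prod_qpochhammer])
     (use assms in \<open>simp_all add: power_mult_distrib power_mult[symmetric] algebra_simps power2_eq_square\<close>)

lemma prod_lessThan_mult_split:
  fixes g :: "nat \<Rightarrow> 'a::comm_monoid_mult"
  shows "(\<Prod>n<N * k. g n) = (\<Prod>r<k. \<Prod>j<N. g (j * k + r))"
proof -
  have "(\<Prod>n\<in>{j * k..<j * k + k}. g n) = (\<Prod>r<k. g (j * k + r))" for j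
    using prod.shift_bounds_nat_ivl[of g 0 "j * k" k] by (simp add: atLeast0LessThan add.commute)
  then have "(\<Prod>n<N * k. g n) = (\<Prod>j<N. \<Prod>r<k. g (j * k + r))"
    by (simp add: prod.nat_group[symmetric])
  then show ?thesis
    by (simp add: prod.swap[of _ "{..<N}"])
qed

lemma qpochhammer_inf_split:
  fixes a q :: "'a::{real_normed_field, banach}"
  assumes q: "norm q < 1" and k: "k > 0"
  shows "qpochhammer_inf a q = (\<Prod>r<k. qpochhammer_inf (a * q ^ r) (q ^ k))"
proof -
  have qk: "norm (q ^ k) < 1"
    using q k by (simp add: norm_power power_less_one_iff)
  have "(\<lambda>N. qpochhammer (N * k) a q) \<longlonglongrightarrow> qpochhammer_inf a q"
    by (rule filterlim_compose[OF tendsto_qpochhammer[OF q] filterlim_subseq])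
       (use k in \<open>simp add: strict_mono_def\<close>)
  moreover have "(\<lambda>N. \<Prod>r<k. qpochhammer N (a * q ^ r) (q ^ k))
      \<longlonglongrightarrow> (\<Prod>r<k. qpochhammer_inf (a * q ^ r) (q ^ k))"
    by (intro tendsto_prod tendsto_qpochhammer qk)
  moreover have "qpochhammer (N * k) a q = (\<Prod>r<k. qpochhammer N (a * q ^ r) (q ^ k))" for N
    unfolding qpochhammer_def prod_lessThan_mult_split
    by (simp add: power_add mult_ac flip: power_mult)
  ultimately show ?thesis
    using LIMSEQ_unique by force
qed

lemma qpochhammer_inf_pos:
  fixes a q :: real
  assumes "0 \<le> a" "a < 1" "0 \<le> q" "q < 1"
  shows "0 < qpochhammer_inf a q"
proof -
  have "a * q ^ k < 1" for k
    using assms by (smt (verit) mult_left_le power_le_one)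
  then show ?thesis
    unfolding qpochhammer_inf_def
    by (intro less_0_prodinf convergent_prod_qpochhammer) (use assms in auto)
qed

lemma qpochhammer_antimono:
  fixes a q :: real
  assumes "0 \<le> a" "a \<le> 1" "0 \<le> q" "q \<le> 1" "m \<le> n"
  shows "qpochhammer n a q \<le> qpochhammer m a q"
proof -
  have factor: "0 \<le> 1 - a * q ^ k" "1 - a * q ^ k \<le> 1" for k
    using assms by (simp_all add: mult_le_one power_le_one)
  have "qpochhammer n a q = qpochhammer m a q * (\<Prod>k\<in>{m..<n}. 1 - a * q ^ k)"
    unfolding qpochhammer_def using assms(5)
    by (metis prod.atLeastLessThan_concat lessThan_atLeast0 zero_le)
  also have "\<dots> \<le> qpochhammer m a q"
    using factor by (intro mult_left_le prod_le_1 prod_nonneg) (auto simp: qpochhammer_def intro!: prod_nonneg)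
  finally show ?thesis .
qed

lemma qpochhammer_inf_le:
  fixes a q :: real
  assumes "0 \<le> a" "a \<le> 1" "0 \<le> q" "q < 1"
  shows "qpochhammer_inf a q \<le> qpochhammer n a q"
  unfolding qpochhammer_inf_def qpochhammer_def
proof (rule prod_ge_prodinf)
  show "(\<lambda>k. 1 - a * q ^ k) has_prod (\<Prod>k. 1 - a * q ^ k)"
    using convergent_prod_qpochhammer[of q a] assms by (simp add: convergent_prod_has_prod)
qed (use assms in \<open>simp_all add: mult_le_one power_le_one\<close>)

section \<open>Gaussian binomial coefficients\<close>

fun qbinomial :: "'a::comm_ring_1 \<Rightarrow> nat \<Rightarrow> nat \<Rightarrow> 'a" where
  "qbinomial x 0 k = (if k = 0 then 1 else 0)"
| "qbinomial x (Suc M) k =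
     qbinomial x M k + (if k = 0 then 0 else x ^ (M + 1 - k) * qbinomial x M (k - 1))"

lemma qbinomial_eq_0: "M < k \<Longrightarrow> qbinomial x M k = 0"
  by (induction M arbitrary: k) auto

lemma qbinomial_0_right [simp]: "qbinomial x M 0 = 1"
  by (induction M) auto

lemma qbinomial_diag [simp]: "qbinomial x M M = 1"
  by (induction M) (auto simp: qbinomial_eq_0)

theorem q_binomial_theorem:
  fixes x y :: "'a::comm_ring_1"
  shows "(\<Prod>j<M. 1 + y * x ^ j) = (\<Sum>k\<le>M. qbinomial x M k * x ^ (k * (k - 1) div 2) * y ^ k)"
proof (induction M)
  case 0
  then show ?case by simp
next
  case (Suc M)
  define t where "t k = qbinomial x M k * x ^ (k * (k - 1) div 2) * y ^ k" for k
  have shifted: "x ^ (M - k) * qbinomial x M k * x ^ (Suc k * k div 2) * y ^ Suc k = t k * (y * x ^ M)"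
    if "k \<le> M" for k
  proof -
    have "Suc k * k div 2 = k * (k - 1) div 2 + k"
      by (cases k) simp_all
    then have "M - k + Suc k * k div 2 = k * (k - 1) div 2 + M"
      using that by simp
    then have "x ^ (M - k) * x ^ (Suc k * k div 2) = x ^ (k * (k - 1) div 2) * x ^ M"
      by (metis power_add)
    then show ?thesis
      by (simp add: t_def algebra_simps)
  qed
  have "(\<Sum>k\<le>Suc M. qbinomial x (Suc M) k * x ^ (k * (k - 1) div 2) * y ^ k)
      = (\<Sum>k\<le>Suc M. t k)
        + (\<Sum>k\<le>Suc M. (if k = 0 then 0 else x ^ (M + 1 - k) * qbinomial x M (k - 1))
                          * x ^ (k * (k - 1) div 2) * y ^ k)"
    by (simp add: t_def algebra_simps sum.distrib)
  also have "(\<Sum>k\<le>Suc M. t k) = (\<Sum>k\<le>M. t k)"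
    by (simp add: t_def qbinomial_eq_0)
  also have "(\<Sum>k\<le>Suc M. (if k = 0 then 0 else x ^ (M + 1 - k) * qbinomial x M (k - 1))
                          * x ^ (k * (k - 1) div 2) * y ^ k)
      = (\<Sum>k\<le>M. x ^ (M - k) * qbinomial x M k * x ^ (Suc k * k div 2) * y ^ Suc k)"
    by (subst sum.atMost_Suc_shift) simp
  also have "\<dots> = (\<Sum>k\<le>M. t k) * (y * x ^ M)"
    unfolding sum_distrib_right by (rule sum.cong[OF refl], rule shifted) simp
  also have "(\<Sum>k\<le>M. t k) + (\<Sum>k\<le>M. t k) * (y * x ^ M) = (\<Prod>j<Suc M. 1 + y * x ^ j)"
    by (simp add: Suc t_def algebra_simps)
  finally show ?case ..
qed

lemma qpochhammer_Suc: "qpochhammer (Suc n) a q = qpochhammer n a q * (1 - a * q ^ n)"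
  by (simp add: qpochhammer_def)

lemma qbinomial_qpochhammer:
  fixes x :: "'a::comm_ring_1"
  assumes "k \<le> M"
  shows "qbinomial x M k * qpochhammer k x x * qpochhammer (M - k) x x = qpochhammer M x x"
  using assms
proof (induction M arbitrary: k)
  case 0
  then show ?case by (simp add: qpochhammer_def)
next
  case (Suc M)
  consider "k = 0" | "k = Suc M" | j where "k = Suc j" "j < M"
    using Suc.prems by (cases k) (auto simp: le_less)
  then show ?case
  proof cases
    case 1
    then show ?thesis by (simp add: qpochhammer_def)
  next
    case 2
    then show ?thesis by (simp add: qbinomial_eq_0 qpochhammer_def)
  next
    case 3
    define d where "d = M - k"
    have d: "Suc M - k = Suc d" "M - j = Suc d" "M + 1 - k = Suc d" "Suc d + k = Suc M"
      using 3 by (auto simp: d_def)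
    have IH1: "qbinomial x M k * qpochhammer k x x * qpochhammer d x x = qpochhammer M x x"
      using Suc.IH[of k] 3 by (simp add: d_def)
    have IH2: "qbinomial x M j * qpochhammer j x x * qpochhammer (Suc d) x x = qpochhammer M x x"
      using Suc.IH[of j] 3 d by simp
    have "qbinomial x (Suc M) k * qpochhammer k x x * qpochhammer (Suc M - k) x x
        = qbinomial x M k * qpochhammer k x x * qpochhammer d x x * (1 - x ^ Suc d)
          + x ^ Suc d * (qbinomial x M j * qpochhammer j x x * qpochhammer (Suc d) x x) * (1 - x ^ k)"
      using 3 d by (simp add: qpochhammer_Suc algebra_simps)
    also have "\<dots> = qpochhammer M x x * (1 - x ^ (Suc d + k))"
      unfolding IH1 IH2 by (simp add: algebra_simps power_add)
    finally show ?thesis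
      using d by (simp add: qpochhammer_Suc)
  qed
qed

lemma norm_qbinomial_le:
  fixes x :: "'a::{comm_ring_1, real_normed_algebra_1}"
  shows "norm (qbinomial x M k) \<le> qbinomial (norm x) M k"
proof (induction M arbitrary: k)
  case 0
  then show ?case by simp
next
  case (Suc M)
  have "norm (x ^ (M + 1 - k) * qbinomial x M (k - 1))
      \<le> norm x ^ (M + 1 - k) * qbinomial (norm x) M (k - 1)"
    by (rule order_trans[OF norm_mult_ineq]) (simp add: mult_mono norm_power_ineq Suc.IH)
  then show ?case
    using Suc.IH[of k] by (auto intro: order_trans[OF norm_triangle_ineq])
qed

lemma qbinomial_closed_form:
  fixes x :: "'a::real_normed_field"
  assumes "norm x < 1" "k \<le> M"
  shows "qbinomial x M k = qpochhammer M x x / (qpochhammer k x x * qpochhammer (M - k) x x)"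
  using qbinomial_qpochhammer[OF assms(2), of x] qpochhammer_nonzero[OF assms(1) assms(1)]
  by (simp add: field_simps)

lemma qbinomial_symmetric:
  fixes x :: "'a::real_normed_field"
  assumes "norm x < 1" "k \<le> M"
  shows "qbinomial x M (M - k) = qbinomial x M k"
  using assms by (simp add: qbinomial_closed_form mult.commute)

lemma qbinomial_le_real:
  fixes r :: real
  assumes "0 \<le> r" "r < 1"
  shows "qbinomial r M k \<le> 1 / qpochhammer_inf r r"
proof (cases "k \<le> M")
  case False
  then show ?thesis
    using qpochhammer_inf_pos[OF assms assms] by (simp add: qbinomial_eq_0)
next
  case True
  have pos: "0 < qpochhammer_inf r r" "0 < qpochhammer n r r" for n
    using qpochhammer_inf_pos[OF assms assms] qpochhammer_inf_le[of r r n] assms by auto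
  have "qbinomial r M k = qpochhammer M r r / (qpochhammer k r r * qpochhammer (M - k) r r)"
    using assms True by (simp add: qbinomial_closed_form)
  also have "\<dots> \<le> qpochhammer k r r / (qpochhammer k r r * qpochhammer (M - k) r r)"
    using assms pos True by (intro divide_right_mono qpochhammer_antimono) (auto intro: less_imp_le)
  also have "\<dots> = 1 / qpochhammer (M - k) r r"
    using pos(2)[of k] by simp
  also have "\<dots> \<le> 1 / qpochhammer_inf r r"
    using assms pos by (intro divide_left_mono qpochhammer_inf_le) auto
  finally show ?thesis .
qed

lemma tendsto_qbinomial_central:
  fixes x :: "'a::{real_normed_field, banach}"
  assumes "norm x < 1"
  shows "(\<lambda>N. qbinomial x (2 * N) (N + i)) \<longlonglongrightarrow> 1 / qpochhammer_inf x x"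
proof -
  define P where "P = qpochhammer_inf x x"
  have "P \<noteq> 0"
    unfolding P_def using qpochhammer_inf_nonzero[OF assms assms] .
  have lim: "(\<lambda>N. qpochhammer (f N) x x) \<longlonglongrightarrow> P" if "filterlim f at_top sequentially" for f
    unfolding P_def using filterlim_compose[OF tendsto_qpochhammer[OF assms] that] .
  have "(\<lambda>N. qpochhammer (2 * N) x x / (qpochhammer (N + i) x x * qpochhammer (N - i) x x))
      \<longlonglongrightarrow> P / (P * P)"
    using \<open>P \<noteq> 0\<close>
    by (intro tendsto_intros lim filterlim_subseq filterlim_add_const_nat_at_top filterlim_minus_const_nat_at_top)
       (auto simp: strict_mono_def)
  moreover have "eventually (\<lambda>N. qbinomial x (2 * N) (N + i)
      = qpochhammer (2 * N) x x / (qpochhammer (N + i) x x * qpochhammer (N - i) x x)) sequentially"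
    using eventually_ge_at_top[of i]
    by eventually_elim (simp add: qbinomial_closed_form[OF assms] mult_2)
  ultimately show ?thesis
    using \<open>P \<noteq> 0\<close> by (simp add: P_def tendsto_cong)
qed

section \<open>The Jacobi triple product\<close>

definition choose2 :: "int \<Rightarrow> int" where
  "choose2 m = m * (m - 1) div 2"

lemma double_choose2: "2 * choose2 m = m * (m - 1)"
  unfolding choose2_def by simp

lemma choose2_diff: "choose2 (a - b) = choose2 a - a * b + choose2 (b + 1)"
  using double_choose2[of "a - b"] double_choose2[of a] double_choose2[of "b + 1"]
  by (simp add: algebra_simps)

lemma choose2_uminus: "choose2 (- m) = choose2 m + m"
  using double_choose2[of "- m"] double_choose2[of m] by (simp add: algebra_simps)

lemma choose2_plus_1: "choose2 (m + 1) = choose2 m + m"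
  using double_choose2[of "m + 1"] double_choose2[of m] by (simp add: algebra_simps)

lemma choose2_of_nat: "int (k * (k - 1) div 2) = choose2 (int k)"
  by (cases k) (simp_all add: choose2_def zdiv_int algebra_simps)

definition jacobi_term :: "'a::field \<Rightarrow> 'a \<Rightarrow> int \<Rightarrow> 'a" where
  "jacobi_term x z m = x powi choose2 m * z powi m"

lemma prod_lessThan_double:
  fixes g :: "nat \<Rightarrow> 'a::comm_monoid_mult"
  shows "(\<Prod>j<2 * N. g j) = (\<Prod>j<N. g j) * (\<Prod>j<N. g (N + j))"
  using prod.atLeastLessThan_concat[of 0 N "2 * N" g] prod.shift_bounds_nat_ivl[of g 0 N N]
  by (simp add: atLeast0LessThan mult_2 add.commute)

lemma prod_power_int_choose2:
  fixes x z :: "'a::field"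
  assumes "x \<noteq> 0"
  shows "(\<Prod>i<N. z * x powi (- int i - 1)) = z ^ N * x powi (- choose2 (int N + 1))"
proof (induction N)
  case 0
  then show ?case by (simp add: choose2_def)
next
  case (Suc N)
  have "(- int N - 1) + - choose2 (int N + 1) = - choose2 (int (Suc N) + 1)"
    using double_choose2[of "int N + 2"] double_choose2[of "int N + 1"] by (simp add: algebra_simps)
  then have "x powi (- int N - 1) * x powi (- choose2 (int N + 1)) = x powi (- choose2 (int (Suc N) + 1))"
    using assms by (metis power_int_add)
  then show ?case
    using Suc by (simp add: mult_ac)
qed

lemma finite_jacobi_triple_product:
  fixes x z :: "'a::field"
  assumes x: "x \<noteq> 0" and z: "z \<noteq> 0"
  shows "qpochhammer N (- z) x * qpochhammer N (- x / z) x
       = (\<Sum>k\<le>2 * N. qbinomial x (2 * N) k * jacobi_term x z (int k - int N))"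
proof -
  txt \<open>The q-binomial theorem with 2N factors and y = z x^(-N); c collects the factors
    z x^(-i-1) pulled out of the lower N factors 1 + z x^(-i-1).\<close>
  define y where "y = z * x powi (- int N)"
  define c where "c = z ^ N * x powi (- choose2 (int N + 1))"
  have "c \<noteq> 0"
    using x z by (simp add: c_def)
  have lower: "(\<Prod>j<N. 1 + y * x ^ j) = c * qpochhammer N (- x / z) x"
  proof -
    have "1 + y * x ^ (N - Suc i) = z * x powi (- int i - 1) * (1 - (- x / z) * x ^ i)" if "i < N" for i
    proof -
      have "y * x ^ (N - Suc i) = z * (x powi (- int N) * x powi (int N + (- int i - 1)))"
        using that by (simp add: y_def of_nat_diff algebra_simps flip: power_int_of_nat)
      also have "\<dots> = z * x powi (- int i - 1)"
        using x by (simp flip: power_int_add)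
      moreover have "x powi (- int i - 1) * (x * x ^ i) = 1"
        using x by (simp add: power_int_minus power_int_diff field_simps)
      ultimately show ?thesis
        using z by (simp add: field_simps)
    qed
    then have "(\<Prod>i<N. 1 + y * x ^ (N - Suc i))
        = (\<Prod>i<N. z * x powi (- int i - 1)) * qpochhammer N (- x / z) x"
      by (simp add: qpochhammer_def prod.distrib)
    then show ?thesis
      using x prod.nat_diff_reindex[of "\<lambda>j. 1 + y * x ^ j" N] by (simp add: prod_power_int_choose2 c_def)
  qed
  have upper: "(\<Prod>j<N. 1 + y * x ^ (N + j)) = qpochhammer N (- z) x"
    using x by (simp add: qpochhammer_def y_def power_add power_int_minus field_simps)
  have monomial: "x ^ (k * (k - 1) div 2) * y ^ k = c * jacobi_term x z (int k - int N)" for k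
  proof -
    have "x ^ (k * (k - 1) div 2) * y ^ k = z ^ k * (x powi choose2 (int k) * x powi (- int N * int k))"
      by (simp add: y_def power_mult_distrib power_int_power' flip: choose2_of_nat)
    also have "\<dots> = z powi (int N + (int k - int N))
        * x powi (- choose2 (int N + 1) + choose2 (int k - int N))"
      using x by (simp add: choose2_diff algebra_simps flip: power_int_add)
    also have "\<dots> = c * jacobi_term x z (int k - int N)"
      by (simp only: c_def jacobi_term_def power_int_add[OF disjI1[OF x]] power_int_add[OF disjI1[OF z]]
          power_int_of_nat mult_ac)
    finally show ?thesis .
  qed
  have "c * (qpochhammer N (- z) x * qpochhammer N (- x / z) x) = (\<Prod>j<2 * N. 1 + y * x ^ j)"
    by (simp add: prod_lessThan_double lower upper)
  also have "\<dots> = c * (\<Sum>k\<le>2 * N. qbinomial x (2 * N) k * jacobi_term x z (int k - int N))"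
    unfolding q_binomial_theorem sum_distrib_left
    by (rule sum.cong[OF refl]) (simp only: mult.assoc monomial mult.left_commute)
  finally show ?thesis
    using \<open>c \<noteq> 0\<close> by simp
qed

lemma jacobi_term_uminus:
  fixes x z :: "'a::field"
  assumes "x \<noteq> 0" "z \<noteq> 0"
  shows "jacobi_term x z (- m) = jacobi_term x (x / z) m"
  using assms by (simp add: jacobi_term_def choose2_uminus power_int_add power_int_minus
      power_int_divide_distrib field_simps)

lemma jacobi_term_Suc:
  fixes x z :: "'a::field"
  assumes "x \<noteq> 0"
  shows "jacobi_term x z (int (Suc i)) = jacobi_term x z (int i) * (x ^ i * z)"
proof -
  have "choose2 (int (Suc i)) = choose2 (int i) + int i"
    using choose2_plus_1[of "int i"] by (simp add: add.commute)
  then show ?thesis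
    using assms by (simp add: jacobi_term_def power_int_add mult_ac)
qed

lemma summable_norm_jacobi_term:
  fixes x z :: "'a::real_normed_field"
  assumes "x \<noteq> 0" "norm x < 1"
  shows "summable (\<lambda>i. norm (jacobi_term x z (int i)))"
proof -
  have "(\<lambda>n. norm x ^ n * norm z) \<longlonglongrightarrow> 0 * norm z"
    using assms by (intro tendsto_intros LIMSEQ_power_zero) simp
  then obtain N0 where N0: "\<And>n. n \<ge> N0 \<Longrightarrow> norm x ^ n * norm z \<le> 1 / 2"
    by (metis (no_types, lifting) eventually_sequentially less_imp_le mult_zero_left
        order_tendstoD(2) zero_less_divide_1_iff zero_less_numeral)
  show ?thesis
  proof (rule summable_ratio_test[of "1 / 2" N0])
    fix n
    assume "N0 \<le> n"
    have "norm (jacobi_term x z (int (Suc n))) = norm (jacobi_term x z (int n)) * (norm x ^ n * norm z)"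
      by (simp only: jacobi_term_Suc[OF assms(1)]) (simp add: norm_mult norm_power)
    also have "\<dots> \<le> norm (jacobi_term x z (int n)) * (1 / 2)"
      using N0 \<open>N0 \<le> n\<close> by (intro mult_left_mono) auto
    finally show "norm (norm (jacobi_term x z (int (Suc n)))) \<le> 1 / 2 * norm (norm (jacobi_term x z (int n)))"
      by simp
  qed simp
qed

lemma tendsto_weighted_partial_sums:
  fixes f :: "nat \<Rightarrow> 'a::{real_normed_field, banach}"
  assumes f: "summable (\<lambda>i. norm (f i))"
    and w: "\<And>i. (\<lambda>N. w N i) \<longlonglongrightarrow> L" and bound: "\<And>N i. norm (w N i) \<le> C"
    and h: "filterlim h at_top sequentially"
  shows "(\<lambda>N. \<Sum>i<h N. w N i * f i) \<longlonglongrightarrow> L * (\<Sum>i. f i)"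
proof -
  define a where "a i N = (if i < h N then w N i * f i else 0)" for i N
  have "0 \<le> C"
    using bound[of 0 0] norm_ge_zero order_trans by blast
  have "(\<lambda>N. \<Sum>i. a i N) \<longlonglongrightarrow> (\<Sum>i. L * f i)"
  proof (rule conjunct2[OF conjunct2[OF tannerys_theorem]])
    show "(\<lambda>N. a i N) \<longlonglongrightarrow> L * f i" for i
    proof (rule Lim_transform_eventually)
      show "(\<lambda>N. w N i * f i) \<longlonglongrightarrow> L * f i"
        by (intro tendsto_mult_right w)
      show "eventually (\<lambda>N. w N i * f i = a i N) sequentially"
        using h by (auto simp: a_def filterlim_at_top elim!: allE[of _ "Suc i"] eventually_mono)
    qed
    show "eventually (\<lambda>(i, N). norm (a i N) \<le> C * norm (f i)) (at_top \<times>\<^sub>F sequentially)"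
      using bound \<open>0 \<le> C\<close>
      by (intro always_eventually) (auto simp: a_def norm_mult intro: mult_right_mono order_trans[OF norm_ge_zero])
  qed (use f in \<open>simp_all add: summable_mult\<close>)
  moreover have "(\<Sum>i. a i N) = (\<Sum>i<h N. w N i * f i)" for N
    by (subst suminf_finite[of "{..<h N}"]) (auto simp: a_def)
  ultimately show ?thesis
    using suminf_mult[OF summable_norm_cancel[OF f], of L] by simp
qed

lemma sum_atMost_double_split:
  fixes g :: "nat \<Rightarrow> 'a::comm_monoid_add"
  shows "(\<Sum>k\<le>2 * N. g k) = (\<Sum>i<Suc N. g (N + i)) + (\<Sum>i<N. g (N - Suc i))"
proof -
  have "(\<Sum>k\<le>2 * N. g k) = sum g ({..<N} \<union> {N..<N + Suc N})"
    by (rule sum.cong) auto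
  also have "\<dots> = sum g {..<N} + sum g {N..<N + Suc N}"
    by (rule sum.union_disjoint) auto
  also have "sum g {N..<N + Suc N} = (\<Sum>i<Suc N. g (N + i))"
    using sum.shift_bounds_nat_ivl[of g 0 N "Suc N"] by (simp add: atLeast0LessThan add.commute)
  finally show ?thesis
    by (simp add: sum.nat_diff_reindex add.commute)
qed

lemma has_sum_int_split:
  fixes f :: "int \<Rightarrow> 'a::{real_normed_vector, banach}"
  assumes "summable (\<lambda>n. norm (f (int n)))" "summable (\<lambda>n. norm (f (- int (Suc n))))"
  shows "(f has_sum ((\<Sum>n. f (int n)) + (\<Sum>n. f (- int (Suc n))))) UNIV"
proof -
  have "((\<lambda>n. f (int n)) has_sum (\<Sum>n. f (int n))) UNIV"
    "((\<lambda>n. f (- int (Suc n))) has_sum (\<Sum>n. f (- int (Suc n)))) UNIV"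
    using assms by (auto intro!: norm_summable_imp_has_sum summable_sums summable_norm_cancel)
  then have "(f has_sum (\<Sum>n. f (int n))) (range int)"
    "(f has_sum (\<Sum>n. f (- int (Suc n)))) (range (\<lambda>n. - int (Suc n)))"
    by (auto simp: has_sum_reindex inj_on_def comp_def)
  moreover have "m \<in> range int \<union> range (\<lambda>n. - int (Suc n))" for m
    using rangeI[of int "nat m"] rangeI[of "\<lambda>n. - int (Suc n)" "nat (- m - 1)"] by (cases "0 \<le> m") auto
  then have "range int \<union> range (\<lambda>n. - int (Suc n)) = UNIV"
    by blast
  moreover have "range int \<inter> range (\<lambda>n. - int (Suc n)) = {}"
    by auto
  ultimately show ?thesis
    using has_sum_Un_disjoint by metis
qed

lemma finite_jacobi_triple_product_split:
  fixes x z :: "'a::{real_normed_field, banach}"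
  assumes x: "x \<noteq> 0" and xl: "norm x < 1" and z: "z \<noteq> 0"
  shows "qpochhammer N (- z) x * qpochhammer N (- x / z) x
       = (\<Sum>i<Suc N. qbinomial x (2 * N) (N + i) * jacobi_term x z (int i))
         + (\<Sum>i<N. qbinomial x (2 * N) (N + Suc i) * jacobi_term x z (- int (Suc i)))"
proof -
  have negative: "qbinomial x (2 * N) (N - Suc i) * jacobi_term x z (int (N - Suc i) - int N)
      = qbinomial x (2 * N) (N + Suc i) * jacobi_term x z (- int (Suc i))" if "i < N" for i
  proof -
    have "2 * N - (N + Suc i) = N - Suc i" "int (N - Suc i) - int N = - int (Suc i)"
      using that by simp_all
    then show ?thesis
      using qbinomial_symmetric[OF xl, of "N + Suc i" "2 * N"] that by simp
  qed
  show ?thesis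
    unfolding finite_jacobi_triple_product[OF x z] sum_atMost_double_split
    by (intro arg_cong2[where f = "(+)"] sum.cong refl) (simp, metis negative lessThan_iff)
qed

theorem jacobi_triple_product:
  fixes x z :: "'a::{real_normed_field, banach}"
  assumes x: "x \<noteq> 0" and xl: "norm x < 1" and z: "z \<noteq> 0"
  shows "(jacobi_term x z has_sum
           qpochhammer_inf x x * qpochhammer_inf (- z) x * qpochhammer_inf (- x / z) x) UNIV"
proof -
  define P where "P = qpochhammer_inf x x"
  have "P \<noteq> 0"
    unfolding P_def using qpochhammer_inf_nonzero[OF xl xl] .
  have s1: "summable (\<lambda>i. norm (jacobi_term x z (int i)))"
    by (rule summable_norm_jacobi_term[OF x xl])
  have s2: "summable (\<lambda>i. norm (jacobi_term x z (- int (Suc i))))"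
    unfolding jacobi_term_uminus[OF x z] summable_Suc_iff[where f = "\<lambda>i. norm (jacobi_term x (x / z) (int i))"]
    by (rule summable_norm_jacobi_term[OF x xl])
  have bound: "norm (qbinomial x M k) \<le> 1 / qpochhammer_inf (norm x) (norm x)" for M k
    using norm_qbinomial_le[of x M k] qbinomial_le_real[of "norm x" M k] xl by simp
  have "(\<lambda>N. qpochhammer N (- z) x * qpochhammer N (- x / z) x)
      \<longlonglongrightarrow> 1 / P * (\<Sum>i. jacobi_term x z (int i)) + 1 / P * (\<Sum>i. jacobi_term x z (- int (Suc i)))"
    unfolding finite_jacobi_triple_product_split[OF x xl z] P_def
    by (intro tendsto_add tendsto_weighted_partial_sums[OF s1 _ bound]
        tendsto_weighted_partial_sums[OF s2 _ bound]
        tendsto_qbinomial_central xl filterlim_Suc filterlim_ident)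
  moreover have "(\<lambda>N. qpochhammer N (- z) x * qpochhammer N (- x / z) x)
      \<longlonglongrightarrow> qpochhammer_inf (- z) x * qpochhammer_inf (- x / z) x"
    by (intro tendsto_mult tendsto_qpochhammer xl)
  ultimately have "P * (qpochhammer_inf (- z) x * qpochhammer_inf (- x / z) x)
      = (\<Sum>i. jacobi_term x z (int i)) + (\<Sum>i. jacobi_term x z (- int (Suc i)))"
    using \<open>P \<noteq> 0\<close> LIMSEQ_unique by (fastforce simp: field_simps)
  then show ?thesis
    using has_sum_int_split[OF s1 s2] by (simp add: P_def mult.assoc)
qed

section \<open>Theta series as eta quotients\<close>

definition theta_term :: "'a::field \<Rightarrow> 'a \<Rightarrow> nat \<Rightarrow> nat \<Rightarrow> int \<Rightarrow> 'a" where
  "theta_term c q a b n = c powi n * q powi (int a * choose2 n + int b * n)"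

lemma has_sum_theta_term:
  fixes q c :: "'a::{real_normed_field, banach}"
  assumes q: "q \<noteq> 0" "norm q < 1" and c: "c \<noteq> 0" and ab: "0 < a" "b \<le> a"
  shows "(theta_term c q a b has_sum
           qpochhammer_inf (q ^ a) (q ^ a) * qpochhammer_inf (- c * q ^ b) (q ^ a)
           * qpochhammer_inf (- (q ^ (a - b)) / c) (q ^ a)) UNIV"
proof -
  have "norm (q ^ a) < 1"
    using q ab by (simp add: norm_power power_less_one_iff)
  moreover have "theta_term c q a b = jacobi_term (q ^ a) (c * q ^ b)"
    using q by (simp add: fun_eq_iff theta_term_def jacobi_term_def power_int_mult_distrib power_int_power
        power_int_add mult_ac)
  moreover have "q ^ a / (c * q ^ b) = q ^ (a - b) / c"
    using q ab by (simp add: power_diff)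
  ultimately show ?thesis
    using jacobi_triple_product[of "q ^ a" "c * q ^ b"] q c by simp
qed

lemma theta_term_power: "theta_term c (q ^ k) a b = theta_term c q (k * a) (k * b)"
  by (simp add: fun_eq_iff theta_term_def power_int_power algebra_simps)

lemma eta_f_power: "eta_f m (q ^ k) = eta_f (k * m) q"
  by (simp add: eta_f_def algebra_simps flip: power_mult)

lemma eta_f_qpochhammer_inf: "eta_f m q = qpochhammer_inf (q ^ m) (q ^ m)"
  by (simp add: eta_f_def qpochhammer_inf_def power_mult[symmetric] mult_ac flip: power_add)

lemma eta_f_at_0: "0 < m \<Longrightarrow> eta_f m 0 = 1"
  by (simp add: eta_f_def power_0_left)

lemma eta_f_nonzero: "norm q < 1 \<Longrightarrow> 0 < m \<Longrightarrow> eta_f m q \<noteq> 0"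
  unfolding eta_f_qpochhammer_inf
  by (intro qpochhammer_inf_nonzero) (simp_all add: norm_power power_less_one_iff)

lemma qpochhammer_inf_odd_powers:
  assumes "norm q < 1"
  shows "qpochhammer_inf q (q ^ 2) * eta_f 2 q = eta_f 1 q"
  using qpochhammer_inf_split[OF assms, of 2 q]
  by (simp add: eta_f_qpochhammer_inf numeral_2_eq_2 power2_eq_square)

lemma qpochhammer_inf_minus_self:
  assumes "norm q < 1"
  shows "qpochhammer_inf (- q) q * eta_f 1 q = eta_f 2 q"
  using qpochhammer_inf_mult_minus[OF assms, of q] by (simp add: eta_f_qpochhammer_inf mult.commute)

lemma qpochhammer_inf_mod_10:
  assumes "norm q < 1"
  shows "qpochhammer_inf q (q ^ 10) * qpochhammer_inf (q ^ 3) (q ^ 10) * qpochhammer_inf (q ^ 7) (q ^ 10)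
           * qpochhammer_inf (q ^ 9) (q ^ 10) * (eta_f 2 q * eta_f 5 q) = eta_f 1 q * eta_f 10 q"
    (is "?R * _ = _")
proof -
  have "norm (q ^ 5) < 1" "norm (q ^ 2) < 1"
    using assms by (simp_all add: norm_power power_less_one_iff)
  have five: "qpochhammer_inf (q ^ 5) (q ^ 10) * eta_f 10 q = eta_f 5 q"
    using qpochhammer_inf_odd_powers[OF \<open>norm (q ^ 5) < 1\<close>] by (simp add: eta_f_power flip: power_mult)
  have odd: "qpochhammer_inf q (q ^ 2) = ?R * qpochhammer_inf (q ^ 5) (q ^ 10)"
    using qpochhammer_inf_split[OF \<open>norm (q ^ 2) < 1\<close>, of 5 q]
    by (simp add: insert_commute[of 0] lessThan_nat_numeral flip: power_mult power_Suc)
  have "eta_f 1 q * eta_f 10 q = qpochhammer_inf q (q ^ 2) * eta_f 2 q * eta_f 10 q"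
    using qpochhammer_inf_odd_powers[OF assms] by simp
  also have "\<dots> = ?R * eta_f 2 q * (qpochhammer_inf (q ^ 5) (q ^ 10) * eta_f 10 q)"
    unfolding odd by (simp only: mult_ac)
  finally show ?thesis
    unfolding five by (simp only: mult_ac)
qed

lemma qpochhammer_inf_mod_5_minus:
  assumes "norm q < 1"
  shows "qpochhammer_inf (- q) (q ^ 5) * qpochhammer_inf (- (q ^ 2)) (q ^ 5) * qpochhammer_inf (- (q ^ 3)) (q ^ 5)
           * qpochhammer_inf (- (q ^ 4)) (q ^ 5) * (eta_f 1 q * eta_f 10 q) = eta_f 2 q * eta_f 5 q"
    (is "?S * _ = _")
proof -
  have "norm (q ^ 5) < 1"
    using assms by (simp add: norm_power power_less_one_iff)
  have five: "qpochhammer_inf (- (q ^ 5)) (q ^ 5) * eta_f 5 q = eta_f 10 q"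
    using qpochhammer_inf_minus_self[OF \<open>norm (q ^ 5) < 1\<close>] by (simp add: eta_f_power)
  have all: "qpochhammer_inf (- q) q = ?S * qpochhammer_inf (- (q ^ 5)) (q ^ 5)"
    using qpochhammer_inf_split[OF assms, of 5 "- q"]
    by (simp add: insert_commute[of 0] lessThan_nat_numeral flip: power_Suc numeral_2_eq_2)
  have "eta_f 2 q * eta_f 5 q = qpochhammer_inf (- q) q * eta_f 1 q * eta_f 5 q"
    using qpochhammer_inf_minus_self[OF assms] by simp
  also have "\<dots> = ?S * eta_f 1 q * (qpochhammer_inf (- (q ^ 5)) (q ^ 5) * eta_f 5 q)"
    unfolding all by (simp only: mult_ac)
  finally show ?thesis
    unfolding five by (simp only: mult_ac)
qed

lemma has_sum_theta_phi:
  assumes "q \<noteq> 0" "norm q < 1"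
  shows "(theta_term (-1) q 2 1 has_sum eta_f 1 q ^ 2 / eta_f 2 q) UNIV"
proof -
  have "(theta_term (-1) q 2 1 has_sum eta_f 2 q * qpochhammer_inf q (q ^ 2) ^ 2) UNIV"
    using has_sum_theta_term[OF assms, of "-1" 2 1] by (simp add: eta_f_qpochhammer_inf power2_eq_square mult.assoc)
  also have "eta_f 2 q * qpochhammer_inf q (q ^ 2) ^ 2 = (qpochhammer_inf q (q ^ 2) * eta_f 2 q) ^ 2 / eta_f 2 q"
    using eta_f_nonzero[OF assms(2), of 2] by (simp add: power2_eq_square)
  also have "\<dots> = eta_f 1 q ^ 2 / eta_f 2 q"
    by (simp only: qpochhammer_inf_odd_powers[OF assms(2)])
  finally show ?thesis .
qed

lemma has_sum_theta_psi:
  assumes "q \<noteq> 0" "norm q < 1"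
  shows "(theta_term 1 q 1 1 has_sum 2 * eta_f 2 q ^ 2 / eta_f 1 q) UNIV"
proof -
  have "(theta_term 1 q 1 1 has_sum eta_f 1 q * qpochhammer_inf (- q) q * (2 * qpochhammer_inf (- q) q)) UNIV"
    using has_sum_theta_term[OF assms, of 1 1 1] qpochhammer_inf_unfold[OF assms(2), of "-1"]
    by (simp add: eta_f_qpochhammer_inf)
  also have "eta_f 1 q * qpochhammer_inf (- q) q * (2 * qpochhammer_inf (- q) q)
      = 2 * (qpochhammer_inf (- q) q * eta_f 1 q) ^ 2 / eta_f 1 q"
    using eta_f_nonzero[OF assms(2), of 1] by (simp add: power2_eq_square)
  also have "\<dots> = 2 * eta_f 2 q ^ 2 / eta_f 1 q"
    by (simp only: qpochhammer_inf_minus_self[OF assms(2)])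
  finally show ?thesis .
qed

section \<open>Sums over the cosets of an index-5 sublattice of \<int>^2\<close>

lemma has_sum_product_complex:
  fixes f :: "'a \<Rightarrow> complex" and g :: "'b \<Rightarrow> complex"
  assumes f: "(f has_sum F) UNIV" and g: "(g has_sum G) UNIV"
  shows "((\<lambda>(m, n). f m * g n) has_sum (F * G)) UNIV"
proof -
  have af: "(\<lambda>m. norm (f m)) summable_on UNIV" and ag: "(\<lambda>n. norm (g n)) summable_on UNIV"
    using f g summable_on_iff_abs_summable_on_complex has_sum_imp_summable by blast+
  have "(\<lambda>(m, n). norm (f m) * norm (g n)) summable_on UNIV \<times> UNIV"
  proof (rule summable_on_SigmaI)
    show "((\<lambda>n. (\<lambda>(m, n). norm (f m) * norm (g n)) (m, n))
        has_sum norm (f m) * infsum (\<lambda>n. norm (g n)) UNIV) UNIV" for m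
      using has_sum_cmult_right[OF has_sum_infsum[OF ag]] by simp
  qed (auto intro: summable_on_cmult_left af)
  then have "(\<lambda>(m, n). f m * g n) summable_on UNIV \<times> UNIV"
    by (subst summable_on_iff_abs_summable_on_complex) (simp add: case_prod_unfold norm_mult)
  then have "((\<lambda>(m, n). f m * g n) has_sum (F * G)) (UNIV \<times> UNIV)"
    by (rule has_sum_SigmaI[rotated 2]) (auto intro: has_sum_cmult_right[OF g] has_sum_cmult_left[OF f])
  then show ?thesis
    by simp
qed

definition sublattice_coset :: "int \<Rightarrow> (int \<times> int) set" where
  "sublattice_coset c = {(m, n). (m - 2 * n) mod 5 = c}"

lemma infsum_sublattice_cosets:
  fixes H :: "int \<times> int \<Rightarrow> 'a::banach"
  assumes "H summable_on UNIV"
  shows "infsum H UNIV = infsum H (sublattice_coset 0) + infsum H (sublattice_coset 1)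
           + infsum H (sublattice_coset 2) + infsum H (sublattice_coset 3) + infsum H (sublattice_coset 4)"
proof -
  have summable: "H summable_on A" for A
    using summable_on_subset_banach[OF assms] by blast
  let ?C = sublattice_coset
  have "(m - 2 * n) mod 5 \<in> {0, 1, 2, 3, 4}" for m n :: int
    by auto
  then have "?C 0 \<union> (?C 1 \<union> (?C 2 \<union> (?C 3 \<union> ?C 4))) = UNIV"
    by (auto simp: sublattice_coset_def)
  moreover have "infsum H (?C 0 \<union> (?C 1 \<union> (?C 2 \<union> (?C 3 \<union> ?C 4))))
      = infsum H (?C 0) + (infsum H (?C 1) + (infsum H (?C 2) + (infsum H (?C 3) + infsum H (?C 4))))"
    by (subst infsum_Un_disjoint, (auto simp: summable sublattice_coset_def)[3])+ (rule refl)
  ultimately show ?thesis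
    by (simp add: add.assoc)
qed

lemma mod_5_eqE:
  assumes "(x::int) mod 5 = y mod 5"
  obtains t where "x = y + 5 * t"
proof -
  have "5 dvd x - y"
    using assms by (simp add: mod_eq_dvd_iff)
  then obtain t where "x - y = 5 * t" ..
  then have "x = y + 5 * t"
    by simp
  then show ?thesis
    by (rule that)
qed

definition quarter_turn :: "int \<Rightarrow> int \<times> int \<Rightarrow> int \<times> int" where
  "quarter_turn e = (\<lambda>(m, n). (n, - m - e))"

lemma quarter_turn_sublattice_coset:
  assumes "0 \<le> c" "c < 5"
  shows "quarter_turn e ` sublattice_coset c = sublattice_coset ((2 * c + 2 * e) mod 5)"
proof (intro set_eqI iffI)
  fix p
  assume "p \<in> quarter_turn e ` sublattice_coset c"
  then obtain m n where p: "p = (n, - m - e)" and mn: "(m - 2 * n) mod 5 = c mod 5"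
    using assms by (auto simp: quarter_turn_def sublattice_coset_def)
  from mn obtain t where "m - 2 * n = c + 5 * t"
    by (rule mod_5_eqE)
  then have "n - 2 * (- m - e) = (2 * c + 2 * e) + 5 * (n + 2 * t)"
    by simp
  then have "(n - 2 * (- m - e)) mod 5 = (2 * c + 2 * e) mod 5"
    by (simp only: mod_mult_self2)
  then show "p \<in> sublattice_coset ((2 * c + 2 * e) mod 5)"
    by (simp add: p sublattice_coset_def)
next
  fix p
  assume "p \<in> sublattice_coset ((2 * c + 2 * e) mod 5)"
  then obtain m n where p: "p = (m, n)" and mn: "(m - 2 * n) mod 5 = (2 * c + 2 * e) mod 5"
    by (auto simp: sublattice_coset_def)
  from mn obtain t where "m - 2 * n = 2 * c + 2 * e + 5 * t"
    by (rule mod_5_eqE)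
  then have "- n - e - 2 * m = c + 5 * (- n - c - e - 2 * t)"
    by simp
  then have "(- n - e - 2 * m) mod 5 = c"
    using assms by (simp only: mod_mult_self2 mod_pos_pos_trivial)
  then have "(- n - e, m) \<in> sublattice_coset c"
    by (simp add: sublattice_coset_def)
  then show "p \<in> quarter_turn e ` sublattice_coset c"
    by (rule rev_image_eqI) (simp add: quarter_turn_def p)
qed

lemma infsum_quarter_turn:
  fixes H :: "int \<times> int \<Rightarrow> 'a::banach"
  assumes "\<And>p. H (quarter_turn e p) = H p" "0 \<le> c" "c < 5"
  shows "infsum H (sublattice_coset ((2 * c + 2 * e) mod 5)) = infsum H (sublattice_coset c)"
proof -
  have "inj (quarter_turn e)"
    by (auto simp: inj_on_def quarter_turn_def)
  then show ?thesis
    using infsum_reindex[of "quarter_turn e" "sublattice_coset c" H] assms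
    by (simp add: quarter_turn_sublattice_coset comp_def inj_on_subset)
qed

lemma has_sum_sublattice_coset:
  fixes f g :: "int \<Rightarrow> complex" and H :: "int \<times> int \<Rightarrow> complex"
  assumes "(f has_sum F) UNIV" "(g has_sum G) UNIV"
    and H: "\<And>k l. H (2 * k + l + a, k - 2 * l + b) = w * (f k * g l)"
  shows "(H has_sum w * (F * G)) (sublattice_coset ((a - 2 * b) mod 5))"
proof -
  define \<phi> where "\<phi> = (\<lambda>(k, l). (2 * k + l + a, k - 2 * l + b))"
  have "inj \<phi>"
    by (auto simp: inj_on_def \<phi>_def)
  have "range \<phi> = sublattice_coset ((a - 2 * b) mod 5)"
  proof (intro set_eqI iffI)
    fix p
    assume "p \<in> range \<phi>"
    then obtain k l where "p = (2 * k + l + a, k - 2 * l + b)"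
      by (auto simp: \<phi>_def)
    moreover have "2 * k + l + a - 2 * (k - 2 * l + b) = (a - 2 * b) + 5 * l"
      by simp
    then have "(2 * k + l + a - 2 * (k - 2 * l + b)) mod 5 = (a - 2 * b) mod 5"
      by (simp only: mod_mult_self2)
    ultimately show "p \<in> sublattice_coset ((a - 2 * b) mod 5)"
      by (simp add: sublattice_coset_def)
  next
    fix p
    assume "p \<in> sublattice_coset ((a - 2 * b) mod 5)"
    then obtain m n where p: "p = (m, n)" and mn: "(m - 2 * n) mod 5 = (a - 2 * b) mod 5"
      by (auto simp: sublattice_coset_def)
    from mn obtain l where "m - 2 * n = a - 2 * b + 5 * l"
      by (rule mod_5_eqE)
    then have "p = \<phi> (n + 2 * l - b, l)"
      by (simp add: \<phi>_def p)
    then show "p \<in> range \<phi>"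
      by blast
  qed
  moreover have "((\<lambda>p. H (\<phi> p)) has_sum w * (F * G)) UNIV"
    using has_sum_cmult_right[OF has_sum_product_complex[OF assms(1,2)], of w]
    by (simp add: \<phi>_def H case_prod_unfold)
  ultimately show ?thesis
    using has_sum_reindex[OF \<open>inj \<phi>\<close>, of H] by (simp add: comp_def)
qed

section \<open>Two 5-dissections\<close>

definition theta_pair :: "'a::field \<Rightarrow> 'a \<Rightarrow> nat \<Rightarrow> nat \<Rightarrow> int \<times> int \<Rightarrow> 'a" where
  "theta_pair c q a b = (\<lambda>(m, n). theta_term c q a b m * theta_term c q a b n)"

lemma theta_term_mult:
  fixes c q :: "'a::field"
  assumes "c \<noteq> 0" "q \<noteq> 0"
  shows "theta_term c q a b m * theta_term c q a' b' n
       = c powi (m + n) * q powi (int a * choose2 m + int b * m + (int a' * choose2 n + int b' * n))"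
  using assms by (simp add: theta_term_def power_int_add mult_ac)

lemma theta_pair_eqI:
  fixes c q s :: "'a::field"
  assumes "c \<noteq> 0" "q \<noteq> 0"
    and "a * choose2 m + b * m + (a * choose2 n + b * n)
           = a1 * choose2 k + b1 * k + (a2 * choose2 l + b2 * l) + d"
    and "c powi (m + n) = s * c powi (k + l)"
  shows "theta_pair c q a b (m, n) = s * q powi d * (theta_term c q a1 b1 k * theta_term c q a2 b2 l)"
proof -
  have "theta_pair c q a b (m, n)
      = c powi (m + n) * q powi (a * choose2 m + b * m + (a * choose2 n + b * n))"
    using assms(1,2) by (simp add: theta_pair_def theta_term_mult)
  also have "\<dots> = s * q powi d
      * (c powi (k + l) * q powi (a1 * choose2 k + b1 * k + (a2 * choose2 l + b2 * l)))"
    using assms by (simp add: power_int_add mult_ac)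
  also have "\<dots> = s * q powi d * (theta_term c q a1 b1 k * theta_term c q a2 b2 l)"
    using assms(1,2) by (simp add: theta_term_mult)
  finally show ?thesis .
qed

lemma phi_pair_coset_0:
  assumes q: "q \<noteq> 0" "norm q < 1"
  shows "(theta_pair (-1) q 2 1 has_sum (eta_f 5 q ^ 2 / eta_f 10 q) ^ 2) (sublattice_coset 0)"
proof -
  have "norm (q ^ 5) < 1"
    using q by (simp add: norm_power power_less_one_iff)
  then have theta5: "(theta_term (-1) q 10 5 has_sum eta_f 5 q ^ 2 / eta_f 10 q) UNIV"
    using has_sum_theta_phi[of "q ^ 5"] q by (simp add: theta_term_power eta_f_power)
  have "theta_pair (-1) q 2 1 (2 * k + l + 0, k - 2 * l + 0)
      = 1 * q powi 0 * (theta_term (-1) q 10 5 k * theta_term (-1) q 10 5 l)" for k l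
  proof (rule theta_pair_eqI)
    show "int 2 * choose2 (2 * k + l + 0) + int 1 * (2 * k + l + 0)
        + (int 2 * choose2 (k - 2 * l + 0) + int 1 * (k - 2 * l + 0))
        = int 10 * choose2 k + int 5 * k + (int 10 * choose2 l + int 5 * l) + 0"
      using double_choose2[of "2 * k + l"] double_choose2[of "k - 2 * l"] double_choose2[of k]
        double_choose2[of l] by simp algebra
  qed (simp_all add: q power_int_minus_left)
  from has_sum_sublattice_coset[OF theta5 theta5 this] show ?thesis
    by (simp add: power2_eq_square)
qed

lemma phi_pair_coset_4:
  assumes q: "q \<noteq> 0" "norm q < 1"
  shows "(theta_pair (-1) q 2 1 has_sum
           - q * (eta_f 10 q ^ 2 * (eta_f 1 q * eta_f 10 q / (eta_f 2 q * eta_f 5 q)))) (sublattice_coset 4)"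
proof -
  have theta1: "(theta_term (-1) q 10 1 has_sum
      eta_f 10 q * qpochhammer_inf q (q ^ 10) * qpochhammer_inf (q ^ 9) (q ^ 10)) UNIV"
    using has_sum_theta_term[OF q, of "-1" 10 1] by (simp add: eta_f_qpochhammer_inf)
  have theta3: "(theta_term (-1) q 10 3 has_sum
      eta_f 10 q * qpochhammer_inf (q ^ 3) (q ^ 10) * qpochhammer_inf (q ^ 7) (q ^ 10)) UNIV"
    using has_sum_theta_term[OF q, of "-1" 10 3] by (simp add: eta_f_qpochhammer_inf)
  have "theta_pair (-1) q 2 1 (2 * k + l + -1, k - 2 * l + 0)
      = -1 * q powi 1 * (theta_term (-1) q 10 1 k * theta_term (-1) q 10 3 l)" for k l
  proof (rule theta_pair_eqI)
    show "int 2 * choose2 (2 * k + l + -1) + int 1 * (2 * k + l + -1)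
        + (int 2 * choose2 (k - 2 * l + 0) + int 1 * (k - 2 * l + 0))
        = int 10 * choose2 k + int 1 * k + (int 10 * choose2 l + int 3 * l) + 1"
      using double_choose2[of "2 * k + l - 1"] double_choose2[of "k - 2 * l"] double_choose2[of k]
        double_choose2[of l] by simp algebra
  qed (simp_all add: q power_int_minus_left)
  note coset = has_sum_sublattice_coset[OF theta1 theta3 this]
  have "qpochhammer_inf q (q ^ 10) * qpochhammer_inf (q ^ 3) (q ^ 10) * qpochhammer_inf (q ^ 7) (q ^ 10)
      * qpochhammer_inf (q ^ 9) (q ^ 10) = eta_f 1 q * eta_f 10 q / (eta_f 2 q * eta_f 5 q)"
    using qpochhammer_inf_mod_10[OF q(2)] eta_f_nonzero[OF q(2)] by (simp add: eq_divide_eq)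
  then have "-1 * q powi 1 * (eta_f 10 q * qpochhammer_inf q (q ^ 10) * qpochhammer_inf (q ^ 9) (q ^ 10)
      * (eta_f 10 q * qpochhammer_inf (q ^ 3) (q ^ 10) * qpochhammer_inf (q ^ 7) (q ^ 10)))
      = - q * (eta_f 10 q ^ 2 * (eta_f 1 q * eta_f 10 q / (eta_f 2 q * eta_f 5 q)))"
    by (auto simp: power2_eq_square mult_ac)
  moreover have "(-1 - 2 * 0) mod 5 = (4::int)"
    by simp
  ultimately show ?thesis
    using coset by simp
qed

lemma psi_pair_coset_3:
  assumes q: "q \<noteq> 0" "norm q < 1"
  shows "(theta_pair 1 q 1 1 has_sum q * (2 * eta_f 10 q ^ 2 / eta_f 5 q) ^ 2) (sublattice_coset 3)"
proof -
  have "norm (q ^ 5) < 1"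
    using q by (simp add: norm_power power_less_one_iff)
  then have theta5: "(theta_term 1 q 5 5 has_sum 2 * eta_f 10 q ^ 2 / eta_f 5 q) UNIV"
    using has_sum_theta_psi[of "q ^ 5"] q by (simp add: theta_term_power eta_f_power)
  have "theta_pair 1 q 1 1 (2 * k + l + 1, k - 2 * l + -1)
      = 1 * q powi 1 * (theta_term 1 q 5 5 k * theta_term 1 q 5 5 l)" for k l
  proof (rule theta_pair_eqI)
    show "int 1 * choose2 (2 * k + l + 1) + int 1 * (2 * k + l + 1)
        + (int 1 * choose2 (k - 2 * l + -1) + int 1 * (k - 2 * l + -1))
        = int 5 * choose2 k + int 5 * k + (int 5 * choose2 l + int 5 * l) + 1"
      using double_choose2[of "2 * k + l + 1"] double_choose2[of "k - 2 * l - 1"] double_choose2[of k]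
        double_choose2[of l] by simp algebra
  qed (simp_all add: q)
  from has_sum_sublattice_coset[OF theta5 theta5 this] show ?thesis
    by (simp add: power2_eq_square)
qed

lemma psi_pair_coset_0:
  assumes q: "q \<noteq> 0" "norm q < 1"
  shows "(theta_pair 1 q 1 1 has_sum
           eta_f 5 q ^ 2 * (eta_f 2 q * eta_f 5 q / (eta_f 1 q * eta_f 10 q))) (sublattice_coset 0)"
proof -
  have theta4: "(theta_term 1 q 5 4 has_sum
      eta_f 5 q * qpochhammer_inf (- (q ^ 4)) (q ^ 5) * qpochhammer_inf (- q) (q ^ 5)) UNIV"
    using has_sum_theta_term[OF q, of 1 5 4] by (simp add: eta_f_qpochhammer_inf)
  have theta2: "(theta_term 1 q 5 2 has_sum
      eta_f 5 q * qpochhammer_inf (- (q ^ 2)) (q ^ 5) * qpochhammer_inf (- (q ^ 3)) (q ^ 5)) UNIV"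
    using has_sum_theta_term[OF q, of 1 5 2] by (simp add: eta_f_qpochhammer_inf)
  have "theta_pair 1 q 1 1 (2 * k + l + 0, k - 2 * l + 0)
      = 1 * q powi 0 * (theta_term 1 q 5 4 k * theta_term 1 q 5 2 l)" for k l
  proof (rule theta_pair_eqI)
    show "int 1 * choose2 (2 * k + l + 0) + int 1 * (2 * k + l + 0)
        + (int 1 * choose2 (k - 2 * l + 0) + int 1 * (k - 2 * l + 0))
        = int 5 * choose2 k + int 4 * k + (int 5 * choose2 l + int 2 * l) + 0"
      using double_choose2[of "2 * k + l"] double_choose2[of "k - 2 * l"] double_choose2[of k]
        double_choose2[of l] by simp algebra
  qed (simp_all add: q)
  note coset = has_sum_sublattice_coset[OF theta4 theta2 this]
  have "qpochhammer_inf (- q) (q ^ 5) * qpochhammer_inf (- (q ^ 2)) (q ^ 5) * qpochhammer_inf (- (q ^ 3)) (q ^ 5)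
      * qpochhammer_inf (- (q ^ 4)) (q ^ 5) = eta_f 2 q * eta_f 5 q / (eta_f 1 q * eta_f 10 q)"
    using qpochhammer_inf_mod_5_minus[OF q(2)] eta_f_nonzero[OF q(2)] by (simp add: eq_divide_eq)
  then have "1 * q powi 0 * (eta_f 5 q * qpochhammer_inf (- (q ^ 4)) (q ^ 5) * qpochhammer_inf (- q) (q ^ 5)
      * (eta_f 5 q * qpochhammer_inf (- (q ^ 2)) (q ^ 5) * qpochhammer_inf (- (q ^ 3)) (q ^ 5)))
      = eta_f 5 q ^ 2 * (eta_f 2 q * eta_f 5 q / (eta_f 1 q * eta_f 10 q))"
    by (auto simp: power2_eq_square mult_ac)
  then show ?thesis
    using coset by simp
qed

lemma has_sum_theta_pair:
  fixes c q :: complex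
  shows "(theta_term c q a b has_sum F) UNIV \<Longrightarrow> (theta_pair c q a b has_sum F ^ 2) UNIV"
  using has_sum_product_complex[of "theta_term c q a b" F "theta_term c q a b" F]
  by (simp add: theta_pair_def power2_eq_square)

lemma phi_pair_quarter_turn:
  assumes "q \<noteq> 0"
  shows "theta_pair (-1) q 2 1 (quarter_turn 0 p) = theta_pair (-1) q 2 1 p"
proof -
  have "theta_term (-1) q 2 1 (- m) = theta_term (-1) q 2 1 m" for m
    by (simp add: theta_term_def choose2_uminus power_int_minus_one_minus algebra_simps)
  then show ?thesis
    by (simp add: theta_pair_def quarter_turn_def case_prod_unfold mult.commute)
qed

lemma psi_pair_quarter_turn:
  assumes "q \<noteq> 0"
  shows "theta_pair 1 q 1 1 (quarter_turn 1 p) = theta_pair 1 q 1 1 p"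
proof -
  have exponent: "choose2 (- m - 1) + (- m - 1) = choose2 m + m" for m
  proof -
    have "2 * (choose2 (- m - 1) + (- m - 1)) = 2 * (choose2 m + m)"
      using double_choose2[of "- m - 1"] double_choose2[of m] by (simp add: algebra_simps)
    then show ?thesis
      by simp
  qed
  have "theta_term 1 q 1 1 (- m - 1) = theta_term 1 q 1 1 m" for m
    unfolding theta_term_def by (simp only: of_nat_1 mult_1_left power_int_1_left exponent)
  then show ?thesis
    by (simp add: theta_pair_def quarter_turn_def case_prod_unfold mult.commute)
qed

theorem phi_squared_dissection:
  assumes q: "q \<noteq> 0" "norm q < 1"
  shows "(eta_f 1 q ^ 2 / eta_f 2 q) ^ 2 = (eta_f 5 q ^ 2 / eta_f 10 q) ^ 2
           + 4 * (- q * (eta_f 10 q ^ 2 * (eta_f 1 q * eta_f 10 q / (eta_f 2 q * eta_f 5 q))))"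
proof -
  let ?H = "theta_pair (-1) q 2 1"
  have all: "(?H has_sum (eta_f 1 q ^ 2 / eta_f 2 q) ^ 2) UNIV"
    by (rule has_sum_theta_pair[OF has_sum_theta_phi[OF q]])
  have turn: "infsum ?H (sublattice_coset ((2 * c + 2 * 0) mod 5)) = infsum ?H (sublattice_coset c)"
    if "0 \<le> c" "c < 5" for c
    using infsum_quarter_turn[where H = ?H and e = 0, OF phi_pair_quarter_turn[OF q(1)] that] .
  have "infsum ?H (sublattice_coset 1) = infsum ?H (sublattice_coset 4)"
    "infsum ?H (sublattice_coset 2) = infsum ?H (sublattice_coset 4)"
    "infsum ?H (sublattice_coset 3) = infsum ?H (sublattice_coset 4)"
    using turn[of 1] turn[of 2] turn[of 4] by simp_all
  then show ?thesis
    using infsum_sublattice_cosets[OF has_sum_imp_summable[OF all]] infsumI[OF all]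
      infsumI[OF phi_pair_coset_0[OF q]] infsumI[OF phi_pair_coset_4[OF q]]
    by simp
qed

theorem psi_squared_dissection:
  assumes q: "q \<noteq> 0" "norm q < 1"
  shows "(2 * eta_f 2 q ^ 2 / eta_f 1 q) ^ 2 = q * (2 * eta_f 10 q ^ 2 / eta_f 5 q) ^ 2
           + 4 * (eta_f 5 q ^ 2 * (eta_f 2 q * eta_f 5 q / (eta_f 1 q * eta_f 10 q)))"
proof -
  let ?H = "theta_pair 1 q 1 1"
  have all: "(?H has_sum (2 * eta_f 2 q ^ 2 / eta_f 1 q) ^ 2) UNIV"
    by (rule has_sum_theta_pair[OF has_sum_theta_psi[OF q]])
  have turn: "infsum ?H (sublattice_coset ((2 * c + 2 * 1) mod 5)) = infsum ?H (sublattice_coset c)"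
    if "0 \<le> c" "c < 5" for c
    using infsum_quarter_turn[where H = ?H and e = 1, OF psi_pair_quarter_turn[OF q(1)] that] .
  have "infsum ?H (sublattice_coset 1) = infsum ?H (sublattice_coset 0)"
    "infsum ?H (sublattice_coset 2) = infsum ?H (sublattice_coset 0)"
    "infsum ?H (sublattice_coset 4) = infsum ?H (sublattice_coset 0)"
    using turn[of 0] turn[of 2] turn[of 1] by simp_all
  then show ?thesis
    using infsum_sublattice_cosets[OF has_sum_imp_summable[OF all]] infsumI[OF all]
      infsumI[OF psi_pair_coset_0[OF q]] infsumI[OF psi_pair_coset_3[OF q]]
    by (simp add: add.commute)
qed

lemma lemma2p8_polynomial_form:
  fixes q E R P D :: complex
  assumes nonzero: "E \<noteq> 0" "R \<noteq> 0" "P \<noteq> 0" "D \<noteq> 0"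
    and s1: "E ^ 2 = q * D ^ 2 * R ^ 2 + P ^ 4 * D ^ 2 * R"
    and s2: "E ^ 2 * R ^ 4 * P ^ 4 = D ^ 2 * P ^ 4 - 4 * q * D ^ 2 * R"
  shows "- q * ((P * D) ^ 5 / (E * R * P) + 2 * q * D ^ 5 / E) ^ 2
           + (E * R * P) ^ 4 * (P * D) ^ 4
           + 9 * q * (P * D) ^ 10 / (E * R * P) ^ 2
           - 8 * q ^ 3 * D ^ 10 / E ^ 2
         = E ^ 4 * (P * D) ^ 12 / ((E * R * P) ^ 4 * D ^ 4)
           + 4 * q ^ 2 * E ^ 2 * (P * D) ^ 2 * D ^ 6 / (E * R * P) ^ 2"
    (is "?lhs = ?rhs")
proof -
  txt \<open>G is the numerator of ?lhs - ?rhs over (E R P)^4 D^4; the two cofactors exhibit it as an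
    element of the ideal generated by s1 and s2.\<close>
  define G where "G = E^8*R^8*P^12*D^8 + 8*q*E^2*R^2*P^12*D^14 - 4*q^2*E^2*R^3*P^8*D^14
     - 12*q^3*E^2*R^4*P^4*D^14 - E^4*P^12*D^12 - 4*q^2*E^4*R^2*P^4*D^12"
  have "G = (- R*P^16*D^14 - R^6*P^20*D^14 - E^2*P^12*D^12 + E^2*R^10*P^20*D^12 + E^4*R^9*P^16*D^10
        + E^6*R^8*P^12*D^8 + 7*q*R^2*P^12*D^14 + 2*q*R^7*P^16*D^14 + 2*q*E^2*R^11*P^16*D^12
        + q*E^4*R^10*P^12*D^10 - 8*q^2*R^3*P^8*D^14 + 7*q^2*R^8*P^12*D^14 - 4*q^2*E^2*R^2*P^4*D^12
        + q^2*E^2*R^12*P^12*D^12 - 16*q^3*R^4*P^4*D^14 + 4*q^3*R^9*P^8*D^14)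
        * (E^2 - q * D^2 * R^2 - P^4 * D^2 * R)
      + (R^2*P^16*D^14 + R^7*P^20*D^14 - 2*q*R^3*P^12*D^14 + 3*q*R^8*P^16*D^14 - 7*q^2*R^4*P^8*D^14
        + 3*q^2*R^9*P^12*D^14 - 4*q^3*R^5*P^4*D^14 + q^3*R^10*P^8*D^14)
        * (E^2 * R^4 * P^4 - D^2 * P^4 + 4 * q * D^2 * R)"
    unfolding G_def by algebra
  then have "G = 0"
    using s1 s2 by simp
  moreover have "(?lhs - ?rhs) * ((E * R * P) ^ 4 * D ^ 4) = G"
    unfolding G_def using nonzero by (simp add: field_simps) algebra
  ultimately show ?thesis
    using nonzero by simp
qed

lemma lemma2p8_from_dissections:
  fixes q f1 f2 f5 f10 :: complex
  assumes nonzero: "f1 \<noteq> 0" "f2 \<noteq> 0" "f5 \<noteq> 0" "f10 \<noteq> 0"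
    and psi: "(2 * f2 ^ 2 / f1) ^ 2 = q * (2 * f10 ^ 2 / f5) ^ 2 + 4 * (f5 ^ 2 * (f2 * f5 / (f1 * f10)))"
    and phi: "(f1 ^ 2 / f2) ^ 2 = (f5 ^ 2 / f10) ^ 2 + 4 * (- q * (f10 ^ 2 * (f1 * f10 / (f2 * f5))))"
  shows "- q * (f5 ^ 5 / f1 + 2 * q * f10 ^ 5 / f2) ^ 2 + f1 ^ 4 * f5 ^ 4 + 9 * q * f5 ^ 10 / f1 ^ 2
           - 8 * q ^ 3 * f10 ^ 10 / f2 ^ 2
         = f2 ^ 4 * f5 ^ 12 / (f1 ^ 4 * f10 ^ 4) + 4 * q ^ 2 * f2 ^ 2 * f5 ^ 2 * f10 ^ 6 / f1 ^ 2"
proof -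
  define P where "P = f5 / f10"
  define R where "R = f1 * f10 / (f2 * f5)"
  have "P \<noteq> 0" "R \<noteq> 0"
    using nonzero by (simp_all add: P_def R_def)
  have f1: "f1 = f2 * R * P" and f5: "f5 = P * f10"
    using nonzero by (simp_all add: P_def R_def)
  have s1: "f2 ^ 2 = q * f10 ^ 2 * R ^ 2 + P ^ 4 * f10 ^ 2 * R"
  proof -
    have "f2 ^ 2 = (R * P) ^ 2 / 4 * (2 * f2 ^ 2 / f1) ^ 2"
      using nonzero \<open>P \<noteq> 0\<close> \<open>R \<noteq> 0\<close> by (simp add: f1 field_simps power2_eq_square)
    also have "\<dots> = q * f10 ^ 2 * R ^ 2 + P ^ 4 * f10 ^ 2 * R"
      unfolding psi using nonzero \<open>P \<noteq> 0\<close> \<open>R \<noteq> 0\<close> by (simp add: f1 f5 field_simps eval_nat_numeral)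
    finally show ?thesis .
  qed
  have s2: "f2 ^ 2 * R ^ 4 * P ^ 4 = f10 ^ 2 * P ^ 4 - 4 * q * f10 ^ 2 * R"
  proof -
    have "f2 ^ 2 * R ^ 4 * P ^ 4 = (f1 ^ 2 / f2) ^ 2"
      using nonzero by (simp add: f1 field_simps eval_nat_numeral)
    also have "\<dots> = f10 ^ 2 * P ^ 4 - 4 * q * f10 ^ 2 * R"
      unfolding phi using nonzero \<open>P \<noteq> 0\<close> \<open>R \<noteq> 0\<close> by (simp add: f1 f5 field_simps eval_nat_numeral)
    finally show ?thesis .
  qed
  show ?thesis
    using lemma2p8_polynomial_form[OF nonzero(2) \<open>R \<noteq> 0\<close> \<open>P \<noteq> 0\<close> nonzero(4) s1 s2] by (simp add: f1 f5)
qed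

theorem lemma2p8:
  fixes q :: complex
  assumes "norm q < 1"
  shows "- q * (eta_f 5 q ^ 5 / eta_f 1 q + 2 * q * eta_f 10 q ^ 5 / eta_f 2 q) ^ 2
           + eta_f 1 q ^ 4 * eta_f 5 q ^ 4
           + 9 * q * eta_f 5 q ^ 10 / eta_f 1 q ^ 2
           - 8 * q ^ 3 * eta_f 10 q ^ 10 / eta_f 2 q ^ 2
         = eta_f 2 q ^ 4 * eta_f 5 q ^ 12 / (eta_f 1 q ^ 4 * eta_f 10 q ^ 4)
           + 4 * q ^ 2 * eta_f 2 q ^ 2 * eta_f 5 q ^ 2 * eta_f 10 q ^ 6 / eta_f 1 q ^ 2"
proof (cases "q = 0")
  case True
  then show ?thesis
    by (simp add: eta_f_at_0)
next
  case False
  show ?thesis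
    by (rule lemma2p8_from_dissections)
       (use False assms eta_f_nonzero psi_squared_dissection phi_squared_dissection in auto)
qed

end
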